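(* (i) $\lim_{u\uparrow1}\phi(u)=0$. (ii) For all $0<u<v<1$, $\phi(v)\ge\phi(u)-(v-u)$. (iii) For each $n\ge1$ and $u,v\in A^n_<$ with $u<v$, $\phi(v)\le\phi(u)$; that is, $\phi$ is non-increasing on each $A^n_<$.
   Context: Let $\mu,\nu$ be probability measures on $\mathbb R$ with finite first moments and $\mu\le_{cx}\nu$. Put $P_\eta(k)=\int(k-x)^+\eta(dx)$, $D=P_\nu-P_\mu$, and assume $\{k:D(k)>0\}$ is an interval. Let $G$ be any quantile function of $\mu$. For $u\in(0,1)$ let $\mu_u(A)=\mu(A\cap(-\infty,G(u)))+\big(u-\mu((-\infty,G(u)))\big)\delta_{G(u)}(A)$ and $\mathcal E_u=P_\nu-P_{\mu_u}$. $f^c$ is the largest convex minorant of $f$; $Z^f(y)=\inf\{z\ge y: f^c(z)=f(z)\}$. Define $S(u)=Z^{\mathcal E_u}(G(u))$ and $\phi(u)=\inf\partial\mathcal E_u^c(G(u))$. Let $A_<=\{u\in(0,1): G(u+)<S(u-)\}$, an open set, written as a countable disjoint union of open intervals $A^n_<$, $n\ge1$. *)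

theory Defs
  imports "HOL-Probability.Probability"
begin

definition ext_integral :: "real measure \<Rightarrow> (real \<Rightarrow> real) \<Rightarrow> ereal" where
  "ext_integral M f =
     enn2ereal (\<integral>\<^sup>+ x. ennreal (f x) \<partial>M) - enn2ereal (\<integral>\<^sup>+ x. ennreal (- f x) \<partial>M)"

definition cx_le :: "real measure \<Rightarrow> real measure \<Rightarrow> bool" where
  "cx_le M N \<longleftrightarrow> (\<forall>f. convex_on UNIV f \<longrightarrow> ext_integral M f \<le> ext_integral N f)"

definition put :: "real measure \<Rightarrow> real \<Rightarrow> real" where
  "put M k = (\<integral>x. max 0 (k - x) \<partial>M)"

definition quantile_fn :: "real measure \<Rightarrow> (real \<Rightarrow> real) \<Rightarrow> bool" where
  "quantile_fn M G \<longleftrightarrow>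
     (\<forall>u\<in>{0<..<1}. measure M {..<G u} \<le> u \<and> u \<le> measure M {..G u})"

text \<open>Put function of mu_u = mu restricted to (-inf,G u) plus (u - mu((-inf,G u))) times Dirac at G u,
  written out: P_{mu_u}(k).\<close>
definition put_trunc :: "real measure \<Rightarrow> (real \<Rightarrow> real) \<Rightarrow> real \<Rightarrow> real \<Rightarrow> real" where
  "put_trunc M G u k =
     (\<integral>x. indicator {..<G u} x * max 0 (k - x) \<partial>M)
     + (u - measure M {..<G u}) * max 0 (k - G u)"

definition E_fn :: "real measure \<Rightarrow> real measure \<Rightarrow> (real \<Rightarrow> real) \<Rightarrow> real \<Rightarrow> real \<Rightarrow> real" where
  "E_fn M N G u k = put N k - put_trunc M G u k"

definition convex_minorant :: "(real \<Rightarrow> real) \<Rightarrow> real \<Rightarrow> real" where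
  "convex_minorant f x = Sup {g x | g. convex_on UNIV g \<and> (\<forall>y. g y \<le> f y)}"

definition Zf :: "(real \<Rightarrow> real) \<Rightarrow> real \<Rightarrow> real" where
  "Zf f y = Inf {z. z \<ge> y \<and> convex_minorant f z = f z}"

definition subdiff :: "(real \<Rightarrow> real) \<Rightarrow> real \<Rightarrow> real set" where
  "subdiff f x = {s. \<forall>z. f x + s * (z - x) \<le> f z}"

definition S_fn :: "real measure \<Rightarrow> real measure \<Rightarrow> (real \<Rightarrow> real) \<Rightarrow> real \<Rightarrow> real" where
  "S_fn M N G u = Zf (E_fn M N G u) (G u)"

definition phi_fn :: "real measure \<Rightarrow> real measure \<Rightarrow> (real \<Rightarrow> real) \<Rightarrow> real \<Rightarrow> real" where
  "phi_fn M N G u = Inf (subdiff (convex_minorant (E_fn M N G u)) (G u))"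

definition A_lt :: "real measure \<Rightarrow> real measure \<Rightarrow> (real \<Rightarrow> real) \<Rightarrow> real set" where
  "A_lt M N G = {u\<in>{0<..<1}. Lim (at_right u) G < Lim (at_left u) (S_fn M N G)}"

end

theory Submission
  imports Defs
begin

(*
  For u < v, E_u = E_v + (P_{mu_v} - P_{mu_u}), and the increment is the put function of the
  measure mu_v - mu_u, which has mass v - u and lives on [G(u), oo): it is convex, vanishes left
  of G(u) and grows with slope at most v - u. Hence E_u^c >= E_v^c + increment.

  phi(v) is the slope of a supporting line of E_v^c at G(v). Since E_v is continuous, nonnegative
  and grows with slope 1 - v, this line touches E_v at some point right of G(v) unless
  phi(v) >= 1 - v, and at some point left of G(v) unless phi(v) <= 0. Comparing the slopes of
  E_u^c and E_v^c at a right contact point gives (ii), at a left contact point below G(u) it gives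
  (iii). A left contact point a in [G(u), G(v)] cannot occur inside a component of A_<: contact at
  a persists for every w <= v, so w0 = sup {w <= v. G(w) <= a} satisfies S(w0-) <= a <= G(w0+).
  Finally every subgradient of E_u^c lies in [0, 1 - u], which gives (i).
*)

lemma convex_on_max:
  fixes f g :: "'a::real_vector \<Rightarrow> real"
  assumes f: "convex_on S f" and g: "convex_on S g"
  shows "convex_on S (\<lambda>x. max (f x) (g x))"
proof (rule convex_onI)
  fix t :: real and x y assume t: "0 < t" "t < 1" and xy: "x \<in> S" "y \<in> S"
  have "(1 - t) * f x + t * f y \<le> (1 - t) * max (f x) (g x) + t * max (f y) (g y)"
   and "(1 - t) * g x + t * g y \<le> (1 - t) * max (f x) (g x) + t * max (f y) (g y)"
    using t by (intro add_mono mult_left_mono; simp)+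
  then show "max (f ((1 - t) *\<^sub>R x + t *\<^sub>R y)) (g ((1 - t) *\<^sub>R x + t *\<^sub>R y))
      \<le> (1 - t) * max (f x) (g x) + t * max (f y) (g y)"
    using convex_onD[OF f, of t x y] convex_onD[OF g, of t x y] t xy by auto
qed (rule convex_on_imp_convex[OF f])

lemma convex_on_affine_real: "convex_on UNIV (\<lambda>k::real. a + b * k)"
  by (rule convex_onI) (simp_all add: algebra_simps)

lemma convex_on_hinge: "convex_on UNIV (\<lambda>x::real. max 0 (a + b * x))"
  by (rule convex_on_max) (simp_all add: convex_on_const convex_on_affine_real)

lemma subdiffI:
  fixes f :: "real \<Rightarrow> real"
  assumes "\<And>z. f x + s * (z - x) \<le> f z"
  shows "s \<in> subdiff f x"
  using assms by (simp add: subdiff_def)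

lemma subdiffD:
  fixes f :: "real \<Rightarrow> real"
  assumes "s \<in> subdiff f x"
  shows "f x + s * (z - x) \<le> f z"
  using assms by (simp add: subdiff_def)

lemma convex_on_slope_left_le_right:
  fixes f :: "real \<Rightarrow> real"
  assumes f: "convex_on UNIV f" and "z < x" "x < w"
  shows "(f x - f z) / (x - z) \<le> (f w - f x) / (w - x)"
proof -
  have "(f z - f x) / (z - x) \<le> (f z - f w) / (z - w)"
    using convex_on_slope_le(1)[OF f, of z w x] assms by auto
  also have "\<dots> \<le> (f x - f w) / (x - w)"
    using convex_on_slope_le(2)[OF f, of z w x] assms by auto
  finally show ?thesis
    by (metis minus_diff_eq minus_divide_divide)
qed

lemma subdiff_nonempty:
  fixes f :: "real \<Rightarrow> real"
  assumes f: "convex_on UNIV f"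
  shows "subdiff f x \<noteq> {}"
proof -
  define Q where "Q = {(f x - f z) / (x - z) | z. z < x}"
  have Q_le: "q \<le> (f w - f x) / (w - x)" if "q \<in> Q" "x < w" for q w
    using that convex_on_slope_left_le_right[OF f] unfolding Q_def by blast
  have Q_ne: "Q \<noteq> {}"
    unfolding Q_def by (auto intro: exI[of _ "x - 1"])
  have Q_bdd: "bdd_above Q"
    using Q_le[of _ "x + 1"] by (intro bdd_aboveI) simp
  have "Sup Q \<in> subdiff f x"
  proof (rule subdiffI)
    fix z
    show "f x + Sup Q * (z - x) \<le> f z"
    proof (cases z x rule: linorder_cases)
      case less
      have "(f x - f z) / (x - z) \<le> Sup Q"
        using less by (intro cSup_upper[OF _ Q_bdd]) (auto simp: Q_def)
      with less show ?thesis
        by (simp add: pos_divide_le_eq algebra_simps)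
    next
      case greater
      have "Sup Q \<le> (f z - f x) / (z - x)"
        using greater by (intro cSup_least[OF Q_ne]) (auto intro: Q_le)
      with greater show ?thesis
        by (simp add: pos_le_divide_eq algebra_simps)
    qed simp
  qed
  then show ?thesis by blast
qed

lemma bdd_below_subdiff:
  fixes f :: "real \<Rightarrow> real"
  shows "bdd_below (subdiff f x)"
proof (rule bdd_belowI)
  fix s assume "s \<in> subdiff f x"
  from subdiffD[OF this, of "x - 1"] show "f x - f (x - 1) \<le> s" by simp
qed

lemma closed_subdiff:
  fixes f :: "real \<Rightarrow> real"
  shows "closed (subdiff f x)"
  unfolding subdiff_def by (intro closed_Collect_all closed_Collect_le continuous_intros)

lemma Inf_subdiff_mem:
  fixes f :: "real \<Rightarrow> real"
  assumes "convex_on UNIV f"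
  shows "Inf (subdiff f x) \<in> subdiff f x"
  by (rule closed_contains_Inf[OF subdiff_nonempty[OF assms] bdd_below_subdiff closed_subdiff])

lemma nonpos_if_linear_bounded_above:
  fixes a b z\<^sub>0 :: real
  assumes "\<And>z. z\<^sub>0 \<le> z \<Longrightarrow> a * z \<le> b"
  shows "a \<le> 0"
proof (rule ccontr)
  assume "\<not> a \<le> 0"
  define z where "z = max z\<^sub>0 ((\<bar>b\<bar> + 1) / a)"
  have "a * ((\<bar>b\<bar> + 1) / a) \<le> a * z"
    using \<open>\<not> a \<le> 0\<close> unfolding z_def by (intro mult_left_mono) auto
  then have "\<bar>b\<bar> + 1 \<le> a * z"
    using \<open>\<not> a \<le> 0\<close> by simp
  with assms[of z] show False
    unfolding z_def by linarith
qed

lemma subdiff_le_of_growth: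
  fixes f :: "real \<Rightarrow> real"
  assumes s: "s \<in> subdiff f x" and growth: "\<And>z. z\<^sub>0 \<le> z \<Longrightarrow> f z \<le> \<alpha> * z + C"
  shows "s \<le> \<alpha>"
proof -
  have "(s - \<alpha>) * z \<le> C - f x + s * x" if "z\<^sub>0 \<le> z" for z
    using subdiffD[OF s, of z] growth[OF that] by (simp add: algebra_simps)
  then show ?thesis
    using nonpos_if_linear_bounded_above[of z\<^sub>0 "s - \<alpha>"] by force
qed

lemma subdiff_nonneg_of_bounded_left:
  fixes f :: "real \<Rightarrow> real"
  assumes s: "s \<in> subdiff f x" and bounded: "\<And>z. z \<le> z\<^sub>0 \<Longrightarrow> f z \<le> B"
  shows "0 \<le> s"
proof -
  have "(- s) * z \<le> B - f x + s * x" if "- z\<^sub>0 \<le> z" for z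
    using subdiffD[OF s, of "- z"] bounded[of "- z"] that by (simp add: algebra_simps)
  then show ?thesis
    using nonpos_if_linear_bounded_above[of "- z\<^sub>0" "- s"] by force
qed

lemma convex_minorant_set_bounded:
  fixes f :: "real \<Rightarrow> real"
  assumes "\<And>y. c \<le> f y"
  shows "{g x | g. convex_on UNIV g \<and> (\<forall>y. g y \<le> f y)} \<noteq> {}"
    and "bdd_above {g x | g. convex_on UNIV g \<and> (\<forall>y. g y \<le> f y)}"
  using assms by (auto intro!: exI[of _ "\<lambda>_. c"] bdd_aboveI[of _ "f x"] simp: convex_on_const)

lemma convex_minorant_le:
  fixes f :: "real \<Rightarrow> real"
  assumes "\<And>y. c \<le> f y"
  shows "convex_minorant f x \<le> f x"
  unfolding convex_minorant_def
  by (rule cSup_least[OF convex_minorant_set_bounded(1)[OF assms]]) auto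

lemma convex_minorant_greatest:
  fixes f :: "real \<Rightarrow> real"
  assumes "\<And>y. c \<le> f y" and "convex_on UNIV g" and "\<And>y. g y \<le> f y"
  shows "g x \<le> convex_minorant f x"
  unfolding convex_minorant_def
  by (rule cSup_upper[OF _ convex_minorant_set_bounded(2)[OF assms(1)]]) (use assms(2,3) in blast)

lemma convex_on_convex_minorant:
  fixes f :: "real \<Rightarrow> real"
  assumes bound: "\<And>y. c \<le> f y"
  shows "convex_on UNIV (convex_minorant f)"
proof (rule convex_onI)
  fix t x y :: real
  assume t: "0 < t" "t < 1"
  show "convex_minorant f ((1 - t) *\<^sub>R x + t *\<^sub>R y)
      \<le> (1 - t) * convex_minorant f x + t * convex_minorant f y"
    unfolding convex_minorant_def[of f "(1 - t) *\<^sub>R x + t *\<^sub>R y"]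
  proof (rule cSup_least[OF convex_minorant_set_bounded(1)[OF bound]], clarify)
    fix g assume g: "convex_on UNIV g" "\<forall>y. g y \<le> f y"
    have "g ((1 - t) *\<^sub>R x + t *\<^sub>R y) \<le> (1 - t) * g x + t * g y"
      using convex_onD[OF g(1)] t by simp
    also have "\<dots> \<le> (1 - t) * convex_minorant f x + t * convex_minorant f y"
      using t g by (intro add_mono mult_left_mono convex_minorant_greatest[OF bound]) auto
    finally show "g ((1 - t) *\<^sub>R x + t *\<^sub>R y) \<le> \<dots>" .
  qed
qed simp

lemma half_slope_lower_bound:
  fixes h :: "real \<Rightarrow> real"
  assumes growth: "\<And>k. y \<le> k \<Longrightarrow> D * (k - y) + E \<le> h k" and D: "0 < D"
  obtains K where "y \<le> K" and "\<And>k. K \<le> k \<Longrightarrow> D / 2 * (k - y) + 1 \<le> h k"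
proof
  define K where "K = y + 2 * (\<bar>E\<bar> + 1) / D"
  show yK: "y \<le> K"
    unfolding K_def using D by simp
  fix k assume "K \<le> k"
  then have "2 * (\<bar>E\<bar> + 1) / D \<le> k - y"
    unfolding K_def by simp
  then have "2 * (\<bar>E\<bar> + 1) \<le> D * (k - y)"
    using D by (simp add: pos_divide_le_eq mult.commute)
  moreover have "D * (k - y) + E \<le> h k"
    using yK \<open>K \<le> k\<close> by (intro growth) simp
  ultimately show "D / 2 * (k - y) + 1 \<le> h k"
    using abs_ge_minus_self[of E] by (simp add: field_simps)
qed

lemma linear_lower_bound_on_halfline:
  fixes h :: "real \<Rightarrow> real"
  assumes cont: "continuous_on {y..} h" and pos: "\<And>k. y \<le> k \<Longrightarrow> 0 < h k"
    and growth: "\<And>k. y \<le> k \<Longrightarrow> D * (k - y) + E \<le> h k" and D: "0 < D"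
  shows "\<exists>\<epsilon>>0. \<forall>k\<ge>y. \<epsilon> * (1 + (k - y)) \<le> h k"
proof -
  obtain K where yK: "y \<le> K" and far: "\<And>k. K \<le> k \<Longrightarrow> D / 2 * (k - y) + 1 \<le> h k"
    using half_slope_lower_bound[OF growth D] by blast
  obtain m where m: "m \<in> {y..K}" and m_min: "\<And>k. k \<in> {y..K} \<Longrightarrow> h m \<le> h k"
    using continuous_attains_inf[of "{y..K}" h] continuous_on_subset[OF cont] yK by auto
  define \<epsilon> where "\<epsilon> = min (min (D / 2) 1) (h m / (1 + (K - y)))"
  have "0 < \<epsilon>"
    unfolding \<epsilon>_def using D pos[of m] m yK by simp
  moreover have "\<epsilon> * (1 + (k - y)) \<le> h k" if "y \<le> k" for k
  proof (cases "k \<le> K")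
    case True
    have "\<epsilon> * (1 + (k - y)) \<le> h m / (1 + (K - y)) * (1 + (K - y))"
      unfolding \<epsilon>_def using True that pos[of m] m
      by (intro mult_mono) (auto intro: min.coboundedI2)
    also have "\<dots> = h m"
      using yK by simp
    also have "\<dots> \<le> h k"
      using m_min True that by simp
    finally show ?thesis .
  next
    case False
    have "\<epsilon> \<le> min (D / 2) 1"
      unfolding \<epsilon>_def by (rule min.cobounded1)
    then have "\<epsilon> \<le> 1" "\<epsilon> \<le> D / 2"
      by simp_all
    then have "\<epsilon> * (1 + (k - y)) \<le> 1 + D / 2 * (k - y)"
      unfolding distrib_left using that by (intro add_mono mult_right_mono) auto
    then show ?thesis
      using far[of k] False by simp
  qed
  ultimately show ?thesis by blast
qed

lemma linear_lower_bound_everywhere: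
  fixes h :: "real \<Rightarrow> real"
  assumes cont: "isCont h y" and nonneg: "\<And>k. 0 \<le> h k"
    and bound: "\<And>k. y \<le> k \<Longrightarrow> \<epsilon> * (1 + (k - y)) \<le> h k" and \<epsilon>: "0 < \<epsilon>"
  shows "\<exists>\<eta>>0. \<forall>k. \<eta> + \<epsilon> * (k - y) \<le> h k"
proof -
  have "0 < \<epsilon> / 2"
    using \<epsilon> by simp
  with cont obtain r where r: "0 < r" and near: "\<And>k. dist k y < r \<Longrightarrow> dist (h k) (h y) < \<epsilon> / 2"
    unfolding continuous_at_eps_delta by blast
  define \<eta> where "\<eta> = min (\<epsilon> / 2) (\<epsilon> * r)"
  have "\<eta> + \<epsilon> * (k - y) \<le> h k" for k
  proof -
    consider "y \<le> k" | "y - r < k" "k < y" | "k \<le> y - r" by linarith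
    then show ?thesis
    proof cases
      case 1
      then show ?thesis
        using bound[of k] \<epsilon> unfolding \<eta>_def by (simp add: algebra_simps)
    next
      case 2
      then have "\<epsilon> * (k - y) \<le> 0"
        using \<epsilon> by (simp add: mult_nonneg_nonpos)
      moreover have "\<bar>h k - h y\<bar> < \<epsilon> / 2"
        using near[of k] 2 by (simp add: dist_real_def)
      then have "\<epsilon> / 2 < h k"
        using bound[of y] unfolding abs_less_iff by simp
      moreover have "\<eta> \<le> \<epsilon> / 2"
        unfolding \<eta>_def by simp
      ultimately show ?thesis by linarith
    next
      case 3
      then have "\<epsilon> * (k - y) \<le> \<epsilon> * (- r)"
        using \<epsilon> by (intro mult_left_mono) auto
      moreover have "\<eta> \<le> \<epsilon> * r"
        unfolding \<eta>_def by simp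
      ultimately show ?thesis
        using nonneg[of k] by simp
    qed
  qed
  moreover have "0 < \<eta>"
    unfolding \<eta>_def using \<epsilon> r by simp
  ultimately show ?thesis by blast
qed

text \<open>If the line met \<open>f\<close> nowhere on \<open>[y, \<infinity>)\<close>, the gap would be positive there and grow
  linearly, so a slightly raised and steeper line would still lie below \<open>f\<close>, contradicting
  the maximality of \<open>c\<close>.\<close>

lemma supporting_line_touches_right:
  fixes f :: "real \<Rightarrow> real"
  assumes cont: "continuous_on UNIV f"
    and below: "\<And>k. c + s * (k - y) \<le> f k"
    and maximal: "\<And>a b. (\<And>k. a + b * k \<le> f k) \<Longrightarrow> a + b * y \<le> c"
    and growth: "\<And>k. y \<le> k \<Longrightarrow> \<alpha> * k - C \<le> f k" and s: "s < \<alpha>"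
  shows "\<exists>b\<ge>y. f b = c + s * (b - y)"
proof (rule ccontr)
  assume no_touch: "\<not> ?thesis"
  define h where "h k = f k - (c + s * (k - y))" for k
  have h_cont: "continuous_on UNIV h"
    unfolding h_def by (intro continuous_intros cont)
  have pos: "0 < h k" if "y \<le> k" for k
  proof -
    have "f k \<noteq> c + s * (k - y)"
      using no_touch that by blast
    with below[of k] show ?thesis
      unfolding h_def by simp
  qed
  have growth': "(\<alpha> - s) * (k - y) + (\<alpha> * y - C - c) \<le> h k" if "y \<le> k" for k
    using growth[OF that] unfolding h_def by (simp add: algebra_simps)
  obtain \<epsilon> where \<epsilon>: "0 < \<epsilon>" and bound: "\<And>k. y \<le> k \<Longrightarrow> \<epsilon> * (1 + (k - y)) \<le> h k"
    using linear_lower_bound_on_halfline[OF continuous_on_subset[OF h_cont] pos growth'] s by auto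
  have "isCont h y"
    using h_cont by (simp add: continuous_on_eq_continuous_at)
  moreover have "0 \<le> h k" for k
    using below[of k] unfolding h_def by simp
  ultimately obtain \<eta> where "0 < \<eta>" and gap: "\<And>k. \<eta> + \<epsilon> * (k - y) \<le> h k"
    using linear_lower_bound_everywhere[OF _ _ bound \<epsilon>] by blast
  have "(c + \<eta> - (s + \<epsilon>) * y) + (s + \<epsilon>) * k \<le> f k" for k
    using gap[of k] unfolding h_def by (simp add: algebra_simps)
  then have "(c + \<eta> - (s + \<epsilon>) * y) + (s + \<epsilon>) * y \<le> c"
    by (rule maximal)
  with \<open>0 < \<eta>\<close> show False
    by simp
qed

lemma supporting_line_touches_left:
  fixes f :: "real \<Rightarrow> real"
  assumes cont: "continuous_on UNIV f"
    and below: "\<And>k. c + s * (k - y) \<le> f k"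
    and maximal: "\<And>a b. (\<And>k. a + b * k \<le> f k) \<Longrightarrow> a + b * y \<le> c"
    and growth: "\<And>k. k \<le> y \<Longrightarrow> \<beta> * k - C \<le> f k" and s: "\<beta> < s"
  shows "\<exists>a\<le>y. f a = c + s * (a - y)"
proof -
  have "\<exists>b\<ge>- y. f (- b) = c + (- s) * (b - (- y))"
  proof (rule supporting_line_touches_right[where \<alpha> = "- \<beta>" and C = C])
    show "continuous_on UNIV (\<lambda>k. f (- k))"
      by (intro continuous_on_compose2[OF cont] continuous_intros) auto
    show "c + - s * (k - - y) \<le> f (- k)" for k
      using below[of "- k"] by (simp add: algebra_simps)
    show "a + b * - y \<le> c" if minorant: "\<And>k. a + b * k \<le> f (- k)" for a b
    proof -
      have "a + (- b) * k \<le> f k" for k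
        using minorant[of "- k"] by simp
      then show ?thesis
        using maximal[of a "- b"] by simp
    qed
    show "- \<beta> * k - C \<le> f (- k)" if "- y \<le> k" for k
      using growth[of "- k"] that by simp
  qed (use s in simp)
  then obtain b where "- y \<le> b" "f (- b) = c + s * (- b - y)"
    by (auto simp: algebra_simps)
  then show ?thesis
    by (intro exI[of _ "- b"]) simp
qed

lemma Lim_at_left_le_of_mono_bounded:
  fixes F :: "real \<Rightarrow> real"
  assumes mono: "\<And>w w'. a < w \<Longrightarrow> w \<le> w' \<Longrightarrow> w' < x \<Longrightarrow> F w \<le> F w'"
    and bound: "\<And>w. a < w \<Longrightarrow> w < x \<Longrightarrow> F w \<le> K" and "a < x"
  shows "Lim (at_left x) F \<le> K"
proof -
  have "at x within ({..<x} \<inter> {a<..}) = at_left x"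
    by (rule at_within_nhd[where S = "{a<..}"]) (use \<open>a < x\<close> in auto)
  then have lim: "(F \<longlongrightarrow> Sup (F ` ({..<x} \<inter> {a<..}))) (at_left x)"
    using Lim_left_bound[of "{a<..}" x F K] mono bound by simp
  have "eventually (\<lambda>w. F w \<le> K) (at_left x)"
    using eventually_at_left_real[OF \<open>a < x\<close>] by eventually_elim (auto intro: bound)
  then have "Sup (F ` ({..<x} \<inter> {a<..})) \<le> K"
    by (rule tendsto_upperbound[OF lim]) simp
  moreover have "Lim (at_left x) F = Sup (F ` ({..<x} \<inter> {a<..}))"
    by (rule tendsto_Lim[OF _ lim]) simp
  ultimately show ?thesis by simp
qed

lemma less_of_Lim_at_right_less:
  fixes F :: "real \<Rightarrow> real"
  assumes mono: "\<And>w w'. x < w \<Longrightarrow> w \<le> w' \<Longrightarrow> w' < b \<Longrightarrow> F w \<le> F w'"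
    and bound: "\<And>w. x < w \<Longrightarrow> w < b \<Longrightarrow> K \<le> F w" and "x < b"
    and less: "Lim (at_right x) F < c"
  shows "\<exists>w. x < w \<and> w < b \<and> F w < c"
proof -
  have "at x within ({x<..} \<inter> {..<b}) = at_right x"
    by (rule at_within_nhd[where S = "{..<b}"]) (use \<open>x < b\<close> in auto)
  then have lim: "(F \<longlongrightarrow> Inf (F ` ({x<..} \<inter> {..<b}))) (at_right x)"
    using Lim_right_bound[of "{..<b}" x F K] mono bound by simp
  have "Lim (at_right x) F = Inf (F ` ({x<..} \<inter> {..<b}))"
    by (rule tendsto_Lim[OF _ lim]) simp
  then have "eventually (\<lambda>w. F w < c) (at_right x)"
    using order_tendstoD(2)[OF lim] less by simp
  moreover have "eventually (\<lambda>w. x < w \<and> w < b) (at_right x)"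
    using eventually_at_right_real[OF \<open>x < b\<close>] by simp
  ultimately have "eventually (\<lambda>w. x < w \<and> w < b \<and> F w < c) (at_right x)"
    by eventually_elim auto
  then show ?thesis
    using eventually_happens'[of "at_right x"] by simp
qed

lemma sublevel_supremum:
  fixes G :: "real \<Rightarrow> real"
  assumes mono: "\<And>w w'. 0 < w \<Longrightarrow> w \<le> w' \<Longrightarrow> w' < 1 \<Longrightarrow> G w \<le> G w'"
    and uv: "0 < u" "u \<le> v" "v < 1" and a: "G u \<le> a" "a \<le> G v"
  obtains w\<^sub>0 where "u \<le> w\<^sub>0" "w\<^sub>0 \<le> v"
    and "\<And>w. 0 < w \<Longrightarrow> w < w\<^sub>0 \<Longrightarrow> G w \<le> a"
    and "\<And>w. w\<^sub>0 < w \<Longrightarrow> w < 1 \<Longrightarrow> a \<le> G w"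
proof
  define W where "W = {w. 0 < w \<and> w \<le> v \<and> G w \<le> a}"
  have "u \<in> W"
    unfolding W_def using uv a by simp
  have W_bdd: "bdd_above W"
    unfolding W_def by (rule bdd_aboveI[of _ v]) auto
  show "u \<le> Sup W" "Sup W \<le> v"
    using \<open>u \<in> W\<close> W_bdd by (auto intro: cSup_upper cSup_least simp: W_def)
  show "G w \<le> a" if w: "0 < w" "w < Sup W" for w
  proof -
    obtain w' where "w' \<in> W" "w < w'"
      using less_cSup_iff[of W w] \<open>u \<in> W\<close> W_bdd w(2) by blast
    then show ?thesis
      using mono[of w w'] w uv unfolding W_def by force
  qed
  show "a \<le> G w" if "Sup W < w" "w < 1" for w
  proof (rule ccontr)
    assume "\<not> a \<le> G w"
    moreover have "w \<le> v"
      using mono[of v w] a \<open>\<not> a \<le> G w\<close> that uv by force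
    ultimately have "w \<in> W"
      unfolding W_def using \<open>u \<le> Sup W\<close> uv that by simp
    with that(1) show False
      using cSup_upper[OF _ W_bdd] by fastforce
  qed
qed

definition restricted_put :: "real measure \<Rightarrow> real set \<Rightarrow> real \<Rightarrow> real" where
  "restricted_put M A k = (\<integral>x. indicator A x * max 0 (k - x) \<partial>M)"

locale first_moment_distribution = real_distribution M for M :: "real measure" +
  assumes integrable_id: "integrable M (\<lambda>x. x)"
begin

lemma prob_UNIV [simp]: "prob UNIV = 1"
  using prob_space by simp

lemma integrable_indicator_borel:
  assumes "A \<in> sets borel"
  shows "integrable M (indicator A :: real \<Rightarrow> real)"
  using assms by (intro integrable_real_indicator) (simp_all add: less_top[symmetric])

lemma integrable_restricted_put_integrand:
  assumes "A \<in> sets borel"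
  shows "integrable M (\<lambda>x. indicator A x * max 0 (k - x))"
proof (rule Bochner_Integration.integrable_bound)
  show "integrable M (\<lambda>x. \<bar>k\<bar> + \<bar>x\<bar>)"
    using integrable_abs[OF integrable_id] by simp
  show "(\<lambda>x. indicator A x * max 0 (k - x)) \<in> borel_measurable M"
    using assms by measurable
  show "AE x in M. norm (indicator A x * max 0 (k - x)) \<le> norm (\<bar>k\<bar> + \<bar>x\<bar>)"
    by (intro AE_I2) (auto split: split_indicator)
qed

lemma restricted_put_nonneg: "0 \<le> restricted_put M A k"
  unfolding restricted_put_def by (rule Bochner_Integration.integral_nonneg) auto

lemma restricted_put_Un:
  assumes "A \<in> sets borel" "B \<in> sets borel" "A \<inter> B = {}"
  shows "restricted_put M (A \<union> B) k = restricted_put M A k + restricted_put M B k"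
proof -
  have "indicator (A \<union> B) x * max 0 (k - x) = indicator A x * max 0 (k - x) + indicator B x * max 0 (k - x)"
    for x :: real
    using assms(3) by (auto split: split_indicator)
  then show ?thesis
    unfolding restricted_put_def
    using integrable_restricted_put_integrand assms(1,2) by simp
qed

lemma restricted_put_eq_measure_times:
  assumes "A \<in> sets borel" and "\<And>x. x \<in> A \<Longrightarrow> max 0 (k - x) = c"
  shows "restricted_put M A k = measure M A * c"
proof -
  have "restricted_put M A k = (\<integral>x. indicator A x * c \<partial>M)"
    unfolding restricted_put_def using assms(2) by (intro Bochner_Integration.integral_cong) (auto split: split_indicator)
  then show ?thesis
    using integrable_indicator_borel[OF assms(1)] by simp
qed

lemma restricted_put_singleton: "restricted_put M {a} k = measure M {a} * max 0 (k - a)"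
  by (rule restricted_put_eq_measure_times) auto

lemma restricted_put_eq_0:
  assumes "A \<subseteq> {a..}" and "k \<le> a"
  shows "restricted_put M A k = 0"
  unfolding restricted_put_def using assms
  by (intro Bochner_Integration.integral_eq_zero_AE AE_I2) (auto split: split_indicator)

lemma restricted_put_le:
  assumes "A \<in> sets borel" and "A \<subseteq> {a..}"
  shows "restricted_put M A k \<le> measure M A * max 0 (k - a)"
proof -
  have "restricted_put M A k \<le> (\<integral>x. indicator A x * max 0 (k - a) \<partial>M)"
    unfolding restricted_put_def using assms
    by (intro Bochner_Integration.integral_mono integrable_restricted_put_integrand
        integrable_mult_left integrable_indicator_borel) (auto split: split_indicator)
  then show ?thesis
    using integrable_indicator_borel[OF assms(1)] by simp
qed

lemma restricted_put_eq_linear: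
  assumes "A \<in> sets borel" and "A \<subseteq> {..k}"
  shows "restricted_put M A k = measure M A * k - (\<integral>x. indicator A x * x \<partial>M)"
proof -
  have "restricted_put M A k = (\<integral>x. indicator A x * k - indicator A x * x \<partial>M)"
    unfolding restricted_put_def using assms(2)
    by (intro Bochner_Integration.integral_cong) (auto split: split_indicator)
  also have "\<dots> = measure M A * k - (\<integral>x. indicator A x * x \<partial>M)"
    using integrable_indicator_borel[OF assms(1)] integrable_real_mult_indicator[OF _ integrable_id, of A] assms(1)
    by (simp add: mult.commute)
  finally show ?thesis .
qed

lemma convex_on_restricted_put:
  assumes "A \<in> sets borel"
  shows "convex_on UNIV (restricted_put M A)"
proof (rule convex_onI)
  fix t a b :: real assume t: "0 < t" "t < 1"
  have "restricted_put M A ((1 - t) *\<^sub>R a + t *\<^sub>R b)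
      \<le> (\<integral>x. (1 - t) * (indicator A x * max 0 (a - x)) + t * (indicator A x * max 0 (b - x)) \<partial>M)"
    unfolding restricted_put_def
  proof (intro Bochner_Integration.integral_mono integrable_restricted_put_integrand assms
      Bochner_Integration.integrable_add integrable_mult_right)
    fix x :: real
    have "max 0 ((1 - t) * a + t * b - x) \<le> (1 - t) * max 0 (a - x) + t * max 0 (b - x)"
      using convex_onD[OF convex_on_hinge[of "- x" 1], of t a b] t by (simp add: algebra_simps)
    then show "indicator A x * max 0 ((1 - t) *\<^sub>R a + t *\<^sub>R b - x)
        \<le> (1 - t) * (indicator A x * max 0 (a - x)) + t * (indicator A x * max 0 (b - x))"
      by (auto split: split_indicator)
  qed
  also have "\<dots> = (1 - t) * restricted_put M A a + t * restricted_put M A b"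
    unfolding restricted_put_def using integrable_restricted_put_integrand[OF assms] by simp
  finally show "restricted_put M A ((1 - t) *\<^sub>R a + t *\<^sub>R b)
      \<le> (1 - t) * restricted_put M A a + t * restricted_put M A b" .
qed simp

lemma restricted_put_lipschitz:
  assumes "A \<in> sets borel"
  shows "\<bar>restricted_put M A k - restricted_put M A k'\<bar> \<le> \<bar>k - k'\<bar>"
proof -
  have "\<bar>restricted_put M A k - restricted_put M A k'\<bar>
      = \<bar>\<integral>x. indicator A x * max 0 (k - x) - indicator A x * max 0 (k' - x) \<partial>M\<bar>"
    unfolding restricted_put_def using integrable_restricted_put_integrand[OF assms] by simp
  also have "\<dots> \<le> (\<integral>x. \<bar>k - k'\<bar> \<partial>M)"
    using integrable_restricted_put_integrand[OF assms]
    by (intro integral_abs_bound_integral) (auto split: split_indicator)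
  also have "\<dots> = \<bar>k - k'\<bar>"
    by (simp add: prob_space)
  finally show ?thesis .
qed

lemma continuous_on_restricted_put:
  assumes "A \<in> sets borel"
  shows "continuous_on UNIV (restricted_put M A)"
  by (rule lipschitz_on_continuous_on[where L = 1], rule lipschitz_onI)
    (simp_all add: dist_real_def restricted_put_lipschitz[OF assms])

lemma put_eq_restricted_put: "put M k = restricted_put M UNIV k"
  unfolding put_def restricted_put_def by simp

lemma restricted_put_atMost:
  "restricted_put M {..a} k = restricted_put M {..<a} k + measure M {a} * max 0 (k - a)"
proof -
  have "{..<a} \<union> {a} = {..a}"
    by auto
  then show ?thesis
    using restricted_put_Un[of "{..<a}" "{a}" k] by (simp add: restricted_put_singleton)
qed

lemma restricted_put_lessThan_split:
  assumes "a < b"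
  shows "restricted_put M {..<b} k = restricted_put M {..a} k + restricted_put M {a<..<b} k"
proof -
  have "{..a} \<union> {a<..<b} = {..<b}"
    using assms by auto
  moreover have "restricted_put M ({..a} \<union> {a<..<b}) k = restricted_put M {..a} k + restricted_put M {a<..<b} k"
    by (rule restricted_put_Un) auto
  ultimately show ?thesis
    by simp
qed

lemma put_split: "put M k = restricted_put M {..a} k + restricted_put M {a<..} k"
proof -
  have "{..a} \<union> {a<..} = UNIV"
    by auto
  moreover have "restricted_put M ({..a} \<union> {a<..}) k = restricted_put M {..a} k + restricted_put M {a<..} k"
    by (rule restricted_put_Un) auto
  ultimately show ?thesis
    by (simp add: put_eq_restricted_put)
qed

lemma measure_atMost_eq: "measure M {..a} = measure M {..<a} + measure M {a}"
proof -
  have "{..<a} \<union> {a} = {..a}"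
    by auto
  then show ?thesis
    using finite_measure_Union[of "{..<a}" "{a}"] by simp
qed

lemma measure_lessThan_split:
  assumes "a < b"
  shows "measure M {..<b} = measure M {..a} + measure M {a<..<b}"
proof -
  have "{..a} \<union> {a<..<b} = {..<b}"
    using assms by auto
  moreover have "measure M ({..a} \<union> {a<..<b}) = measure M {..a} + measure M {a<..<b}"
    by (rule finite_measure_Union) auto
  ultimately show ?thesis
    by simp
qed

lemma put_ge_linear: "k - (\<integral>x. x \<partial>M) \<le> put M k"
proof -
  have "(\<integral>x. k - x \<partial>M) \<le> put M k"
    unfolding put_def using integrable_restricted_put_integrand[of UNIV k] integrable_id
    by (intro Bochner_Integration.integral_mono) auto
  then show ?thesis
    using integrable_id by (simp add: prob_space)
qed

lemma put_le_linear:
  assumes "0 \<le> k"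
  shows "put M k \<le> k + (\<integral>x. \<bar>x\<bar> \<partial>M)"
proof -
  have "put M k \<le> (\<integral>x. k + \<bar>x\<bar> \<partial>M)"
    unfolding put_def using integrable_restricted_put_integrand[of UNIV k] integrable_abs[OF integrable_id] assms
    by (intro Bochner_Integration.integral_mono) auto
  then show ?thesis
    using integrable_abs[OF integrable_id] by (simp add: prob_space)
qed

lemma put_mono: "k \<le> k' \<Longrightarrow> put M k \<le> put M k'"
  unfolding put_def using integrable_restricted_put_integrand[of UNIV]
  by (intro Bochner_Integration.integral_mono) auto

lemma ext_integral_hinge: "ext_integral M (\<lambda>x. max 0 (k - x)) = ereal (put M k)"
proof -
  have "(\<integral>\<^sup>+ x. ennreal (max 0 (k - x)) \<partial>M) = ennreal (put M k)"
    unfolding put_def using integrable_restricted_put_integrand[of UNIV k]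
    by (intro nn_integral_eq_integral) auto
  moreover have "ennreal (- max 0 (k - x)) = 0" for x
    by (simp add: ennreal_eq_0_iff)
  ultimately show ?thesis
    unfolding ext_integral_def using restricted_put_nonneg[of UNIV k]
    by (simp add: put_eq_restricted_put zero_ennreal.rep_eq)
qed

end

locale cx_quantile_setting =
  \<mu>: first_moment_distribution \<mu> + \<nu>: first_moment_distribution \<nu>
  for \<mu> \<nu> :: "real measure" +
  fixes G :: "real \<Rightarrow> real"
  assumes cx: "cx_le \<mu> \<nu>" and quantile: "quantile_fn \<mu> G"
begin

abbreviation E :: "real \<Rightarrow> real \<Rightarrow> real" where "E w \<equiv> E_fn \<mu> \<nu> G w"
abbreviation Pt :: "real \<Rightarrow> real \<Rightarrow> real" where "Pt w \<equiv> put_trunc \<mu> G w"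
abbreviation \<psi> :: "real \<Rightarrow> real \<Rightarrow> real" where "\<psi> w \<equiv> convex_minorant (E w)"
abbreviation \<phi> :: "real \<Rightarrow> real" where "\<phi> \<equiv> phi_fn \<mu> \<nu> G"

definition atom_weight :: "real \<Rightarrow> real" where
  "atom_weight w = w - measure \<mu> {..<G w}"

lemma quantile_bounds:
  assumes "0 < w" "w < 1"
  shows "measure \<mu> {..<G w} \<le> w" and "w \<le> measure \<mu> {..G w}"
  using quantile assms unfolding quantile_fn_def by auto

lemma G_mono:
  assumes "0 < w" "w \<le> w'" "w' < 1"
  shows "G w \<le> G w'"
proof (rule ccontr)
  assume "\<not> G w \<le> G w'"
  then have "measure \<mu> {..G w'} \<le> measure \<mu> {..<G w}"
    by (intro \<mu>.finite_measure_mono) auto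
  then have "w = w'"
    using quantile_bounds(2)[of w'] quantile_bounds(1)[of w] assms by simp
  with \<open>\<not> G w \<le> G w'\<close> show False by simp
qed

lemma atom_weight_nonneg:
  assumes "0 < w" "w < 1"
  shows "0 \<le> atom_weight w"
  using quantile_bounds(1)[OF assms] unfolding atom_weight_def by simp

lemma atom_weight_le_atom:
  assumes "0 < w" "w < 1"
  shows "atom_weight w \<le> measure \<mu> {G w}"
  using quantile_bounds(2)[OF assms] \<mu>.measure_atMost_eq[of "G w"] unfolding atom_weight_def by simp

lemma put_trunc_eq: "Pt w k = restricted_put \<mu> {..<G w} k + atom_weight w * max 0 (k - G w)"
  unfolding put_trunc_def restricted_put_def atom_weight_def by simp

lemma put_trunc_eq_linear:
  assumes "G w \<le> k"
  shows "Pt w k = w * k - ((\<integral>x. indicator {..<G w} x * x \<partial>\<mu>) + atom_weight w * G w)"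
  using \<mu>.restricted_put_eq_linear[of "{..<G w}" k] assms
  unfolding put_trunc_eq subset_eq by (simp add: atom_weight_def algebra_simps)

lemma put_le_put: "put \<mu> k \<le> put \<nu> k"
proof -
  have "ext_integral \<mu> (\<lambda>x. max 0 (k - x)) \<le> ext_integral \<nu> (\<lambda>x. max 0 (k - x))"
    using cx convex_on_hinge[of k "- 1"] unfolding cx_le_def by simp
  then show ?thesis
    by (simp add: \<mu>.ext_integral_hinge \<nu>.ext_integral_hinge)
qed

lemma put_trunc_le_put:
  assumes "0 < w" "w < 1"
  shows "Pt w k \<le> put \<mu> k"
proof -
  have "Pt w k \<le> restricted_put \<mu> {..<G w} k + measure \<mu> {G w} * max 0 (k - G w)"
    unfolding put_trunc_eq using atom_weight_le_atom[OF assms] by (simp add: mult_right_mono)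
  also have "\<dots> \<le> put \<mu> k"
    using \<mu>.put_split[of k "G w"] \<mu>.restricted_put_nonneg[of "{G w<..}" k]
    by (simp add: \<mu>.restricted_put_atMost)
  finally show ?thesis .
qed

lemma E_nonneg: "0 < w \<Longrightarrow> w < 1 \<Longrightarrow> 0 \<le> E w k"
  using put_le_put[of k] put_trunc_le_put[of w k] unfolding E_fn_def by simp

lemma E_le_put:
  assumes "0 < w" "w < 1"
  shows "E w k \<le> put \<nu> k"
proof -
  have "0 \<le> atom_weight w * max 0 (k - G w)"
    using atom_weight_nonneg[OF assms] by simp
  then show ?thesis
    using \<mu>.restricted_put_nonneg[of "{..<G w}" k] unfolding E_fn_def put_trunc_eq by simp
qed

lemma continuous_on_E: "continuous_on UNIV (E w)"
proof -
  have "E w = (\<lambda>k. restricted_put \<nu> UNIV k - (restricted_put \<mu> {..<G w} k + atom_weight w * max 0 (k - G w)))"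
    unfolding E_fn_def put_trunc_eq \<nu>.put_eq_restricted_put by (rule ext) simp
  moreover have "continuous_on UNIV (restricted_put \<nu> UNIV)" "continuous_on UNIV (restricted_put \<mu> {..<G w})"
    by (simp_all add: \<nu>.continuous_on_restricted_put \<mu>.continuous_on_restricted_put)
  ultimately show ?thesis
    by (simp only:) (intro continuous_intros)
qed

lemma E_le_linear:
  assumes "0 < w" "w < 1"
  obtains C where "\<And>k. max 0 (G w) \<le> k \<Longrightarrow> E w k \<le> (1 - w) * k + C"
proof
  fix k assume k: "max 0 (G w) \<le> k"
  have "(1 - w) * k = k - w * k"
    by (simp add: algebra_simps)
  then show "E w k \<le> (1 - w) * k
      + ((\<integral>x. \<bar>x\<bar> \<partial>\<nu>) + ((\<integral>x. indicator {..<G w} x * x \<partial>\<mu>) + atom_weight w * G w))"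
    using \<nu>.put_le_linear[of k] put_trunc_eq_linear[of w k] k unfolding E_fn_def by linarith
qed

lemma E_ge_linear:
  assumes "0 < w" "w < 1"
  obtains C where "\<And>k. G w \<le> k \<Longrightarrow> (1 - w) * k - C \<le> E w k"
proof
  fix k assume k: "G w \<le> k"
  have "(1 - w) * k = k - w * k"
    by (simp add: algebra_simps)
  then show "(1 - w) * k
      - ((\<integral>x. x \<partial>\<nu>) - ((\<integral>x. indicator {..<G w} x * x \<partial>\<mu>) + atom_weight w * G w)) \<le> E w k"
    using \<nu>.put_ge_linear[of k] put_trunc_eq_linear[of w k] k unfolding E_fn_def by linarith
qed

text \<open>\<open>\<mu>\<^sub>v - \<mu>\<^sub>u\<close> is \<open>\<mu>\<close> on \<open>(G u, G v)\<close> plus atoms at \<open>G u\<close> and \<open>G v\<close>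
  (a single atom at \<open>G u\<close> if \<open>G u = G v\<close>).\<close>

lemma put_trunc_increment_decomposition:
  assumes w: "0 < u" "u \<le> v" "v < 1"
  obtains A c\<^sub>1 c\<^sub>2 b where "A \<in> sets borel" "A \<subseteq> {G u..}" "0 \<le> c\<^sub>1" "0 \<le> c\<^sub>2" "G u \<le> b"
    "measure \<mu> A + c\<^sub>1 + c\<^sub>2 = v - u"
    "\<And>k. Pt v k - Pt u k = restricted_put \<mu> A k + c\<^sub>1 * max 0 (k - G u) + c\<^sub>2 * max 0 (k - b)"
proof (cases "G u = G v")
  case True
  have "Pt v k - Pt u k = restricted_put \<mu> {} k + (v - u) * max 0 (k - G u) + 0 * max 0 (k - G u)" for k
    unfolding put_trunc_eq atom_weight_def restricted_put_def True by (simp add: algebra_simps)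
  then show ?thesis
    using w by (intro that[of "{}" "v - u" 0 "G u"]) auto
next
  case False
  let ?a = "G u" and ?b = "G v"
  have ab: "?a < ?b"
    using G_mono[OF w] False by simp
  show ?thesis
  proof (rule that[of "{?a<..<?b}" "measure \<mu> {..?a} - u" "atom_weight v" ?b])
    show "0 \<le> measure \<mu> {..?a} - u"
      using quantile_bounds(2)[of u] w by linarith
    show "0 \<le> atom_weight v"
      using atom_weight_nonneg[of v] w by linarith
    show "measure \<mu> {?a<..<?b} + (measure \<mu> {..?a} - u) + atom_weight v = v - u"
      using \<mu>.measure_lessThan_split[OF ab] unfolding atom_weight_def by simp
    show "Pt v k - Pt u k = restricted_put \<mu> {?a<..<?b} k + (measure \<mu> {..?a} - u) * max 0 (k - ?a)
        + atom_weight v * max 0 (k - ?b)" for k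
      using \<mu>.measure_atMost_eq[of ?a]
      unfolding put_trunc_eq \<mu>.restricted_put_lessThan_split[OF ab] \<mu>.restricted_put_atMost atom_weight_def
      by (simp add: algebra_simps)
  qed (use ab in auto)
qed

lemma put_trunc_increment:
  assumes w: "0 < u" "u \<le> v" "v < 1"
  shows put_trunc_increment_convex: "convex_on UNIV (\<lambda>k. Pt v k - Pt u k)"
    and put_trunc_increment_nonneg: "0 \<le> Pt v k - Pt u k"
    and put_trunc_increment_eq_0: "k \<le> G u \<Longrightarrow> Pt v k - Pt u k = 0"
    and put_trunc_increment_le: "G u \<le> k \<Longrightarrow> Pt v k - Pt u k \<le> (v - u) * (k - G u)"
proof -
  obtain A c\<^sub>1 c\<^sub>2 b where A: "A \<in> sets borel" "A \<subseteq> {G u..}" and c: "0 \<le> c\<^sub>1" "0 \<le> c\<^sub>2"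
    and b: "G u \<le> b" and mass: "measure \<mu> A + c\<^sub>1 + c\<^sub>2 = v - u"
    and decomp: "\<And>k. Pt v k - Pt u k
      = restricted_put \<mu> A k + c\<^sub>1 * max 0 (k - G u) + c\<^sub>2 * max 0 (k - b)"
    using put_trunc_increment_decomposition[OF w] by blast
  show "convex_on UNIV (\<lambda>k. Pt v k - Pt u k)"
    unfolding decomp using convex_on_hinge[of "- G u" 1] convex_on_hinge[of "- b" 1]
    by (intro convex_on_add \<mu>.convex_on_restricted_put[OF A(1)] convex_on_cmul c) simp_all
  show "0 \<le> Pt v k - Pt u k"
    unfolding decomp using \<mu>.restricted_put_nonneg[of A k] c by simp
  show "k \<le> G u \<Longrightarrow> Pt v k - Pt u k = 0"
    unfolding decomp using \<mu>.restricted_put_eq_0[OF A(2)] b by simp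
  assume k: "G u \<le> k"
  have "restricted_put \<mu> A k \<le> measure \<mu> A * (k - G u)"
    using \<mu>.restricted_put_le[OF A, of k] k by simp
  moreover have "c\<^sub>1 * max 0 (k - G u) = c\<^sub>1 * (k - G u)"
    using k by simp
  moreover have "c\<^sub>2 * max 0 (k - b) \<le> c\<^sub>2 * (k - G u)"
    using c b k by (intro mult_left_mono) auto
  ultimately have "Pt v k - Pt u k \<le> (measure \<mu> A + c\<^sub>1 + c\<^sub>2) * (k - G u)"
    unfolding decomp distrib_right by linarith
  then show "Pt v k - Pt u k \<le> (v - u) * (k - G u)"
    unfolding mass .
qed

lemma \<psi>_le_E: "0 < w \<Longrightarrow> w < 1 \<Longrightarrow> \<psi> w k \<le> E w k"
  by (rule convex_minorant_le) (rule E_nonneg)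

lemma \<psi>_greatest:
  "0 < w \<Longrightarrow> w < 1 \<Longrightarrow> convex_on UNIV g \<Longrightarrow> (\<And>k. g k \<le> E w k) \<Longrightarrow> g k \<le> \<psi> w k"
  by (rule convex_minorant_greatest) (auto intro: E_nonneg)

lemma convex_on_\<psi>: "0 < w \<Longrightarrow> w < 1 \<Longrightarrow> convex_on UNIV (\<psi> w)"
  by (rule convex_on_convex_minorant) (rule E_nonneg)

lemma \<phi>_mem_subdiff: "0 < w \<Longrightarrow> w < 1 \<Longrightarrow> \<phi> w \<in> subdiff (\<psi> w) (G w)"
  unfolding phi_fn_def by (rule Inf_subdiff_mem[OF convex_on_\<psi>])

lemma \<phi>_le_subgradient: "s \<in> subdiff (\<psi> w) (G w) \<Longrightarrow> \<phi> w \<le> s"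
  unfolding phi_fn_def by (rule cInf_lower[OF _ bdd_below_subdiff])

lemma \<psi>_plus_increment_le:
  assumes w: "0 < u" "u \<le> v" "v < 1"
  shows "\<psi> v k + (Pt v k - Pt u k) \<le> \<psi> u k"
proof (rule \<psi>_greatest)
  show "convex_on UNIV (\<lambda>k. \<psi> v k + (Pt v k - Pt u k))"
    using w by (intro convex_on_add convex_on_\<psi> put_trunc_increment_convex) auto
  show "\<psi> v k + (Pt v k - Pt u k) \<le> E u k" for k
    using \<psi>_le_E[of v k] w unfolding E_fn_def by simp
qed (use w in auto)

lemma contact_transfer:
  assumes w: "0 < u" "u \<le> v" "v < 1" and contact: "\<psi> v z = E v z"
  shows "\<psi> u z = E u z"
  using \<psi>_plus_increment_le[OF w, of z] \<psi>_le_E[of u z] contact w unfolding E_fn_def by simp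

lemma subdiff_\<psi>_bounds:
  assumes w: "0 < w" "w < 1" and s: "s \<in> subdiff (\<psi> w) x"
  shows "0 \<le> s" and "s \<le> 1 - w"
proof -
  have "\<psi> w z \<le> put \<nu> x" if "z \<le> x" for z
    using \<psi>_le_E[OF w, of z] E_le_put[OF w, of z] \<nu>.put_mono[OF that] by linarith
  then show "0 \<le> s"
    by (rule subdiff_nonneg_of_bounded_left[OF s])
  obtain C where "\<And>k. max 0 (G w) \<le> k \<Longrightarrow> E w k \<le> (1 - w) * k + C"
    using E_le_linear[OF w] by blast
  then show "s \<le> 1 - w"
    using \<psi>_le_E[OF w] by (intro subdiff_le_of_growth[OF s]) (rule order_trans)
qed

lemma supporting_line_le_E:
  assumes w: "0 < w" "w < 1" and s: "s \<in> subdiff (\<psi> w) x"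
  shows "\<psi> w x + s * (k - x) \<le> E w k"
  using subdiffD[OF s, of k] \<psi>_le_E[OF w, of k] by linarith

lemma affine_minorant_le_\<psi>:
  assumes w: "0 < w" "w < 1" and "\<And>k. a + b * k \<le> E w k"
  shows "a + b * y \<le> \<psi> w y"
  using \<psi>_greatest[OF w convex_on_affine_real] assms(3) .

lemma supporting_line_touches_E_right:
  assumes w: "0 < w" "w < 1" and s: "s \<in> subdiff (\<psi> w) (G w)" "s < 1 - w"
  obtains b where "G w \<le> b" "E w b = \<psi> w (G w) + s * (b - G w)"
proof -
  obtain C where "\<And>k. G w \<le> k \<Longrightarrow> (1 - w) * k - C \<le> E w k"
    using E_ge_linear[OF w] by blast
  then show ?thesis
    using supporting_line_touches_right[OF continuous_on_E supporting_line_le_E[OF w s(1)]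
        affine_minorant_le_\<psi>[OF w] _ s(2)] that by blast
qed

lemma supporting_line_touches_E_left:
  assumes w: "0 < w" "w < 1" and s: "s \<in> subdiff (\<psi> w) y" "0 < s"
  obtains a where "a \<le> y" "E w a = \<psi> w y + s * (a - y)"
  using supporting_line_touches_left[OF continuous_on_E supporting_line_le_E[OF w s(1)]
      affine_minorant_le_\<psi>[OF w], of 0 0] E_nonneg[OF w] s(2) that by auto

lemma supporting_line_contact:
  assumes w: "0 < w" "w < 1" and s: "s \<in> subdiff (\<psi> w) x"
    and contact: "E w b = \<psi> w x + s * (b - x)"
  shows "\<psi> w b = E w b"
  using subdiffD[OF s, of b] \<psi>_le_E[OF w, of b] contact by linarith

lemma subgradient_le_at_contact:
  assumes uv: "0 < u" "u \<le> v" "v < 1"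
    and \<sigma>: "\<sigma> \<in> subdiff (\<psi> v) (G v)" and s: "s \<in> subdiff (\<psi> u) (G u)"
    and contact: "E v b = \<psi> v (G v) + \<sigma> * (b - G v)"
  shows "s * (b - G u) \<le> \<sigma> * (b - G u) + (Pt v b - Pt u b)"
proof -
  have "\<psi> v (G v) + \<sigma> * (G u - G v) \<le> \<psi> u (G u)"
    using subdiffD[OF \<sigma>, of "G u"] \<psi>_plus_increment_le[OF uv, of "G u"]
      put_trunc_increment_eq_0[OF uv, of "G u"] by simp
  moreover have "\<psi> u (G u) + s * (b - G u) \<le> E v b + (Pt v b - Pt u b)"
    using supporting_line_le_E[OF _ _ s, of b] uv unfolding E_fn_def by simp
  moreover have "\<sigma> * (b - G v) - \<sigma> * (G u - G v) = \<sigma> * (b - G u)"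
    by (simp add: algebra_simps)
  ultimately show ?thesis
    using contact by linarith
qed

lemma subgradient_at_contact_left_of_quantile:
  assumes uv: "0 < u" "u \<le> v" "v < 1" and \<sigma>: "\<sigma> \<in> subdiff (\<psi> v) (G v)"
    and "b \<le> G u" and contact: "E v b = \<psi> v (G v) + \<sigma> * (b - G v)"
  shows "\<sigma> \<in> subdiff (\<psi> u) b"
proof (rule subdiffI)
  fix z
  have "\<psi> u b \<le> \<psi> v (G v) + \<sigma> * (b - G v)"
    using \<psi>_le_E[of u b] contact put_trunc_increment_eq_0[OF uv \<open>b \<le> G u\<close>] uv
    unfolding E_fn_def by simp
  moreover have "\<psi> v (G v) + \<sigma> * (z - G v) \<le> \<psi> u z"
    using subdiffD[OF \<sigma>, of z] \<psi>_plus_increment_le[OF uv, of z] put_trunc_increment_nonneg[OF uv, of z]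
    by linarith
  moreover have "\<sigma> * (b - G v) + \<sigma> * (z - b) = \<sigma> * (z - G v)"
    by (simp add: algebra_simps)
  ultimately show "\<psi> u b + \<sigma> * (z - b) \<le> \<psi> u z"
    by linarith
qed

lemma \<phi>_bounds:
  assumes "0 < w" "w < 1"
  shows "0 \<le> \<phi> w" and "\<phi> w \<le> 1 - w"
  using subdiff_\<psi>_bounds[OF assms \<phi>_mem_subdiff[OF assms]] by auto

lemma \<phi>_tendsto_0: "(\<phi> \<longlongrightarrow> 0) (at_left 1)"
proof (rule tendsto_sandwich[of "\<lambda>_. 0" _ _ "\<lambda>w. 1 - w"])
  have "eventually (\<lambda>w. 0 < w \<and> w < 1) (at_left (1::real))"
    using eventually_at_left_real[of 0 "1::real"] by simp
  then show "eventually (\<lambda>w. 0 \<le> \<phi> w) (at_left 1)" "eventually (\<lambda>w. \<phi> w \<le> 1 - w) (at_left 1)"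
    by (eventually_elim, use \<phi>_bounds in auto)+
  show "((\<lambda>w. 1 - w) \<longlongrightarrow> (0::real)) (at_left 1)"
    using tendsto_diff[OF tendsto_const tendsto_ident_at, of 1 1 "{..<1}"] by simp
qed simp

lemma \<phi>_ge:
  assumes uv: "0 < u" "u < v" "v < 1"
  shows "\<phi> u - (v - u) \<le> \<phi> v"
proof -
  have u: "0 < u" "u < 1" and v: "0 < v" "v < 1" and uv': "0 < u" "u \<le> v" "v < 1"
    using uv by auto
  note \<sigma> = \<phi>_mem_subdiff[OF v]
  show ?thesis
  proof (cases "1 - v \<le> \<phi> v")
    case True
    then show ?thesis
      using \<phi>_bounds(2)[OF u] by simp
  next
    case False
    then obtain b where b: "G v \<le> b" "E v b = \<psi> v (G v) + \<phi> v * (b - G v)"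
      using supporting_line_touches_E_right[OF v \<sigma>] by auto
    show ?thesis
    proof (cases "G u < b")
      case True
      have "\<phi> u * (b - G u) \<le> (\<phi> v + (v - u)) * (b - G u)"
        using subgradient_le_at_contact[OF uv' \<sigma> \<phi>_mem_subdiff[OF u] b(2)]
          put_trunc_increment_le[OF uv', of b] True by (simp add: distrib_right)
      then show ?thesis
        using True by (simp add: mult_le_cancel_right)
    next
      case False
      then have "b = G u"
        using b(1) G_mono[OF uv'] by simp
      then have "\<phi> v \<in> subdiff (\<psi> u) (G u)"
        using subgradient_at_contact_left_of_quantile[OF uv' \<sigma> _ b(2)] by simp
      then show ?thesis
        using \<phi>_le_subgradient[of "\<phi> v" u] uv by simp
    qed
  qed
qed

lemma S_fn_eq: "S_fn \<mu> \<nu> G w = Inf {z. G w \<le> z \<and> \<psi> w z = E w z}"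
  unfolding S_fn_def Zf_def by simp

lemma S_fn_le_contact:
  assumes "G w \<le> a" "\<psi> w a = E w a"
  shows "S_fn \<mu> \<nu> G w \<le> a"
  unfolding S_fn_eq using assms by (intro cInf_lower bdd_belowI[of _ "G w"]) auto

lemma S_fn_mono:
  assumes w: "0 < w" "w \<le> w'" "w' < 1" and contact: "G w' \<le> a" "\<psi> w' a = E w' a"
  shows "S_fn \<mu> \<nu> G w \<le> S_fn \<mu> \<nu> G w'"
proof -
  have "{z. G w' \<le> z \<and> \<psi> w' z = E w' z} \<subseteq> {z. G w \<le> z \<and> \<psi> w z = E w z}"
    using G_mono[OF w] contact_transfer[OF w] by force
  then show ?thesis
    unfolding S_fn_eq using contact by (intro cInf_superset_mono bdd_belowI[of _ "G w"]) auto
qed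

lemma A_lt_subset: "A_lt \<mu> \<nu> G \<subseteq> {0<..<1}"
  unfolding A_lt_def by auto

lemma A_lt_right_quantile_below_contact:
  assumes w\<^sub>0: "w\<^sub>0 \<in> A_lt \<mu> \<nu> G"
    and contact: "\<And>w. 0 < w \<Longrightarrow> w < w\<^sub>0 \<Longrightarrow> G w \<le> a \<and> \<psi> w a = E w a"
  obtains w where "w\<^sub>0 < w" "w < 1" "G w < a"
proof -
  have w\<^sub>0_01: "0 < w\<^sub>0" "w\<^sub>0 < 1"
    using w\<^sub>0 A_lt_subset by auto
  have "Lim (at_left w\<^sub>0) (S_fn \<mu> \<nu> G) \<le> a"
  proof (rule Lim_at_left_le_of_mono_bounded[OF _ _ \<open>0 < w\<^sub>0\<close>])
    show "S_fn \<mu> \<nu> G w \<le> S_fn \<mu> \<nu> G w'" if "0 < w" "w \<le> w'" "w' < w\<^sub>0" for w w'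
      using that w\<^sub>0_01 contact[of w'] by (intro S_fn_mono) auto
    show "S_fn \<mu> \<nu> G w \<le> a" if "0 < w" "w < w\<^sub>0" for w
      using contact[OF that] by (intro S_fn_le_contact) auto
  qed
  then have "Lim (at_right w\<^sub>0) G < a"
    using w\<^sub>0 unfolding A_lt_def by simp
  then show ?thesis
    using less_of_Lim_at_right_less[of w\<^sub>0 1 G "G w\<^sub>0"] w\<^sub>0_01 G_mono that by force
qed

lemma no_contact_between_quantiles_on_A_lt:
  assumes uv: "u < v" and T: "connected T" "T \<subseteq> A_lt \<mu> \<nu> G" "u \<in> T" "v \<in> T"
    and a: "G u \<le> a" "a \<le> G v" and contact: "\<psi> v a = E v a"
  shows False
proof -
  have u: "0 < u" and v: "v < 1"
    using T A_lt_subset by auto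
  obtain w\<^sub>0 where w\<^sub>0: "u \<le> w\<^sub>0" "w\<^sub>0 \<le> v"
    and below: "\<And>w. 0 < w \<Longrightarrow> w < w\<^sub>0 \<Longrightarrow> G w \<le> a"
    and above: "\<And>w. w\<^sub>0 < w \<Longrightarrow> w < 1 \<Longrightarrow> a \<le> G w"
    using sublevel_supremum[of G u v a] G_mono u uv v a by auto
  have "w\<^sub>0 \<in> A_lt \<mu> \<nu> G"
    using T w\<^sub>0 is_interval_connected_1[of T] unfolding is_interval_1 by blast
  moreover have "G w \<le> a \<and> \<psi> w a = E w a" if "0 < w" "w < w\<^sub>0" for w
    using below[OF that] contact_transfer[OF that(1) _ v contact] that w\<^sub>0 by simp
  ultimately obtain w where "w\<^sub>0 < w" "w < 1" "G w < a"
    using A_lt_right_quantile_below_contact by blast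
  with above show False
    by force
qed

lemma \<phi>_antimono_on_A_lt_component:
  assumes uv: "u < v" and component: "connected_component (A_lt \<mu> \<nu> G) u v"
  shows "\<phi> v \<le> \<phi> u"
proof -
  obtain T where T: "connected T" "T \<subseteq> A_lt \<mu> \<nu> G" "u \<in> T" "v \<in> T"
    using component unfolding connected_component_def by blast
  have u: "0 < u" "u < 1" and v: "0 < v" "v < 1" and uv': "0 < u" "u \<le> v" "v < 1"
    using T A_lt_subset uv by auto
  note \<sigma> = \<phi>_mem_subdiff[OF v]
  show ?thesis
  proof (cases "\<phi> v \<le> 0")
    case True
    then show ?thesis
      using \<phi>_bounds(1)[OF u] by simp
  next
    case False
    then obtain a where a: "a \<le> G v" "E v a = \<psi> v (G v) + \<phi> v * (a - G v)"
      using supporting_line_touches_E_left[OF v \<sigma>] by auto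
    show ?thesis
    proof (cases "a < G u")
      case True
      have "\<phi> v \<le> s" if s: "s \<in> subdiff (\<psi> u) (G u)" for s
      proof -
        have "s * (a - G u) \<le> \<phi> v * (a - G u)"
          using subgradient_le_at_contact[OF uv' \<sigma> s a(2)] put_trunc_increment_eq_0[OF uv', of a] True
          by simp
        then show ?thesis
          using True by (simp add: mult_le_cancel_right)
      qed
      then show ?thesis
        unfolding phi_fn_def by (intro cInf_greatest subdiff_nonempty convex_on_\<psi> u)
    next
      case False
      then show ?thesis
        using no_contact_between_quantiles_on_A_lt[OF uv T _ a(1) supporting_line_contact[OF v \<sigma> a(2)]]
        by simp
    qed
  qed
qed

end

theorem lemma5p2:
  fixes \<mu> \<nu> :: "real measure" and G :: "real \<Rightarrow> real"
  assumes "prob_space \<mu>" and "sets \<mu> = sets borel"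
    and "prob_space \<nu>" and "sets \<nu> = sets borel"
    and "integrable \<mu> (\<lambda>x. x)" and "integrable \<nu> (\<lambda>x. x)"
    and "cx_le \<mu> \<nu>"
    and "is_interval {k. put \<nu> k - put \<mu> k > 0}"
    and "quantile_fn \<mu> G"
  shows "((phi_fn \<mu> \<nu> G) \<longlongrightarrow> 0) (at_left 1)
    \<and> (\<forall>u v. 0 < u \<and> u < v \<and> v < 1 \<longrightarrow> phi_fn \<mu> \<nu> G v \<ge> phi_fn \<mu> \<nu> G u - (v - u))
    \<and> (\<forall>u v. u < v \<and> connected_component (A_lt \<mu> \<nu> G) u v
           \<longrightarrow> phi_fn \<mu> \<nu> G v \<le> phi_fn \<mu> \<nu> G u)"
proof -
  interpret cx_quantile_setting \<mu> \<nu> G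
    using assms by (intro cx_quantile_setting.intro first_moment_distribution.intro
        first_moment_distribution_axioms.intro real_distribution.intro real_distribution_axioms.intro
        cx_quantile_setting_axioms.intro prob_space.axioms) auto
  show ?thesis
    using \<phi>_tendsto_0 \<phi>_ge \<phi>_antimono_on_A_lt_component by auto
qed

end
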